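(* Let $b\ge2$ be an integer, let $X\subseteq\mathbf{N}^*$ be nonempty, let $J=\{\lfloor\log_b x\rfloor: x\in X\}$, let $j_0=\min J$, and let $G$ denote the smallest $b$-dc-semigroup containing $X$. \begin{enumerate} \item Suppose $j_0>0$, and let $l_0$ be a positive integer with $\{j_0,j_0+1,\dots,j_0+l_0-1\}\subseteq J$. Put $d=\lceil j_0/l_0\rceil$ and $t=dj_0$. \begin{itemize} \item If $d=1$, then $G=I_b(j_0,+\infty)$. \item If $d>1$, write $J\cap\{0,1,\dots,t-1\}=\bigcup_{k=0}^{n}\{j_k,j_k+1,\dots,j_k+l_k-1\}$ with $n\in\mathbf{N}$, $j_k\in\mathbf{N}$, $l_k\in\mathbf{N}^*$ and $j_{k+1}>j_k+l_k$ for $0\le k<n$. Then $G$ is the union of $I_b(t,+\infty)$ with all the sets $I_b\bigl(\sum_{i=1}^e j_{k_i},\ \sum_{i=1}^e l_{k_i}\bigr)$, where $1\le e<d$ and $k_1,\dots,k_e\in\{0,\dots,n\}$ with $j_{k_1}\le\dots\le j_{k_e}$. \end{itemize} \item Suppose $j_0=0$ and $b=2$. If $X=\{1\}$ then $G=\{1\}$. Otherwise, $G=\{1\}\cup G'$, where $G'$ is the smallest $2$-dc-semigroup containing $X\setminus\{1\}$ (described by part (1), applied with $J$ replaced by $J\setminus\{0\}$). \item Suppose $j_0=0$ and $b>2$. Then $G=\mathbf{N}^*$. \end{enumerate}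
   Context: $\mathbf{N}=\{0,1,2,\dots\}$ and $\mathbf{N}^*=\mathbf{N}\setminus\{0\}$. For an integer $b\ge2$, a $b$-dc-semigroup is a subsemigroup $G$ of the multiplicative semigroup $(\mathbf{N}^*,\cdot)$ which is closed with respect to the number of base-$b$ digits: if $x\in G$ and $b^{n-1}\le x<b^n$ then $\{y\in\mathbf{N}: b^{n-1}\le y<b^n\}\subseteq G$. For $i\in\mathbf{N}$ and $j\in\mathbf{N}^*$, $I_b(i,j)=\{x\in\mathbf{N}: b^i\le x<b^{i+j}\}$ and $I_b(i,+\infty)=\{x\in\mathbf{N}: x\ge b^i\}$. Note $\lfloor\log_b x\rfloor$ is one less than the number of base-$b$ digits of $x$. *)

theory Defs
  imports Complex_Main
begin

definition dc_semigroup :: "nat \<Rightarrow> nat set \<Rightarrow> bool" where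
  "dc_semigroup b G \<longleftrightarrow>
     G \<subseteq> {0<..} \<and>
     (\<forall>x\<in>G. \<forall>y\<in>G. x * y \<in> G) \<and>
     (\<forall>x\<in>G. \<forall>n::nat. 1 \<le> n \<and> b ^ (n - 1) \<le> x \<and> x < b ^ n \<longrightarrow>
        {y. b ^ (n - 1) \<le> y \<and> y < b ^ n} \<subseteq> G)"

definition dc_hull :: "nat \<Rightarrow> nat set \<Rightarrow> nat set" where
  "dc_hull b X = \<Inter> {G. dc_semigroup b G \<and> X \<subseteq> G}"

definition Ib :: "nat \<Rightarrow> nat \<Rightarrow> nat \<Rightarrow> nat set" where
  "Ib b i j = {x. b ^ i \<le> x \<and> x < b ^ (i + j)}"

definition Ib_inf :: "nat \<Rightarrow> nat \<Rightarrow> nat set" where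
  "Ib_inf b i = {x. x \<ge> b ^ i}"

end

theory Submission
  imports Defs "HOL-Library.Multiset"
begin

text \<open>
  The \<open>dlog\<close> of a product \<open>x y\<close> is \<open>dlog x + dlog y\<close> or
  \<open>dlog x + dlog y + 1\<close>, and a dc-semigroup is determined by the set of values \<open>dlog\<close> takes on it.
  Hence the hull of \<open>X\<close> consists of all \<open>x\<close> whose \<open>dlog\<close> is a carry sum of \<open>J\<close>, i.e. lies in
  \<open>[a\<^sub>1 + \<dots> + a\<^sub>e, a\<^sub>1 + \<dots> + a\<^sub>e + e)\<close> for some \<open>a\<^sub>i \<in> J\<close>: every carry can be realised by
  suitable factors, except for a factor \<open>1\<close> in base \<open>2\<close>, which is why that case is special.
  If \<open>0 \<in> J\<close> and \<open>b > 2\<close>, every \<open>m\<close> is a carry sum of zeros. If \<open>j\<^sub>0 > 0\<close>, sums of \<open>e \<ge> d\<close>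
  elements of the block \<open>[j\<^sub>0, j\<^sub>0 + l\<^sub>0)\<close> cover every \<open>m \<ge> d j\<^sub>0\<close>, whereas a carry sum
  \<open>m < d j\<^sub>0\<close> has fewer than \<open>d\<close> summands, all below \<open>d j\<^sub>0\<close>, so each lies in one of the
  blocks of \<open>J \<inter> [0, d j\<^sub>0)\<close>.
\<close>

section \<open>Number of digits\<close>

definition dlog :: "nat \<Rightarrow> nat \<Rightarrow> nat" where
  "dlog b x = nat \<lfloor>log (real b) (real x)\<rfloor>"

lemma dlog_eq_iff:
  assumes "2 \<le> b" "0 < x"
  shows "dlog b x = n \<longleftrightarrow> b ^ n \<le> x \<and> x < b ^ (n + 1)"
  using floor_log_nat_eq_powr_iff[OF assms, of n] assms
  by (auto simp: dlog_def nat_eq_iff)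

lemma dlog_bounds:
  assumes "2 \<le> b" "0 < x"
  shows "b ^ dlog b x \<le> x" "x < b ^ (dlog b x + 1)"
  using dlog_eq_iff[OF assms] by blast+

lemma dlog_power [simp]: "2 \<le> b \<Longrightarrow> dlog b (b ^ n) = n"
  by (simp add: dlog_eq_iff)

lemma dlog_eq_zero_iff: "2 \<le> b \<Longrightarrow> 0 < x \<Longrightarrow> dlog b x = 0 \<longleftrightarrow> x < b"
  by (simp add: dlog_eq_iff)

lemma le_dlog_iff:
  assumes "2 \<le> b" "0 < x"
  shows "k \<le> dlog b x \<longleftrightarrow> b ^ k \<le> x"
proof
  assume "k \<le> dlog b x"
  then have "b ^ k \<le> b ^ dlog b x" using assms(1) by (intro power_increasing) auto
  then show "b ^ k \<le> x" using dlog_bounds[OF assms] by linarith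
next
  assume "b ^ k \<le> x"
  then have "b ^ k < b ^ (dlog b x + 1)" using dlog_bounds[OF assms] by linarith
  then have "k < dlog b x + 1" by (rule power_less_imp_less_exp[rotated]) (use assms(1) in simp)
  then show "k \<le> dlog b x" by simp
qed

lemma dlog_less_iff:
  assumes "2 \<le> b" "0 < x"
  shows "dlog b x < k \<longleftrightarrow> x < b ^ k"
  using le_dlog_iff[OF assms, of k] by linarith

lemma dlog_mult:
  assumes "2 \<le> b" "0 < x" "0 < y"
  shows "dlog b (x * y) = dlog b x + dlog b y \<or> dlog b (x * y) = dlog b x + dlog b y + 1"
proof -
  have "b ^ (dlog b x + dlog b y) \<le> x * y"
    unfolding power_add using dlog_bounds[OF assms(1,2)] dlog_bounds[OF assms(1,3)]
    by (intro mult_le_mono) auto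
  moreover have "x * y < b ^ (dlog b x + dlog b y + 2)"
  proof -
    have "x * y < b ^ (dlog b x + 1) * b ^ (dlog b y + 1)"
      using assms(1) dlog_bounds[OF assms(1,2)] dlog_bounds[OF assms(1,3)] by (intro mult_strict_mono) auto
    then show ?thesis by (simp add: power_add mult_ac)
  qed
  moreover have "0 < x * y" using assms by simp
  ultimately have "dlog b x + dlog b y \<le> dlog b (x * y)" "dlog b (x * y) < dlog b x + dlog b y + 2"
    using le_dlog_iff[OF assms(1)] dlog_less_iff[OF assms(1)] by blast+
  then show ?thesis by linarith
qed

lemma Ib_iff:
  assumes "2 \<le> b"
  shows "x \<in> Ib b i j \<longleftrightarrow> 0 < x \<and> i \<le> dlog b x \<and> dlog b x < i + j"
  using assms le_dlog_iff[OF assms] dlog_less_iff[OF assms]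
  by (cases "x = 0") (auto simp: Ib_def)

lemma Ib_inf_iff:
  assumes "2 \<le> b"
  shows "x \<in> Ib_inf b i \<longleftrightarrow> 0 < x \<and> i \<le> dlog b x"
  using assms le_dlog_iff[OF assms] by (cases "x = 0") (auto simp: Ib_inf_def)

lemma digit_block_eq:
  assumes "2 \<le> b"
  shows "{y. b ^ k \<le> y \<and> y < b ^ (k + 1)} = {y. 0 < y \<and> dlog b y = k}"
proof -
  have "0 < b ^ k" using assms by simp
  then have "0 < y" if "b ^ k \<le> y" for y using that by linarith
  then show ?thesis using dlog_eq_iff[OF assms] by blast
qed

section \<open>Digit-closed semigroups and their hulls\<close>

lemma dc_semigroup_iff:
  assumes "2 \<le> b"
  shows "dc_semigroup b G \<longleftrightarrow> G \<subseteq> {0<..} \<and> (\<forall>x\<in>G. \<forall>y\<in>G. x * y \<in> G) \<and>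
     (\<forall>x\<in>G. \<forall>y>0. dlog b y = dlog b x \<longrightarrow> y \<in> G)"
proof -
  have digit_clause: "(\<forall>n. 1 \<le> n \<and> b ^ (n - 1) \<le> x \<and> x < b ^ n \<longrightarrow> {y. b ^ (n - 1) \<le> y \<and> y < b ^ n} \<subseteq> G)
      \<longleftrightarrow> (\<forall>y>0. dlog b y = dlog b x \<longrightarrow> y \<in> G)" if "0 < x" for x
  proof -
    have "1 \<le> n \<and> b ^ (n - 1) \<le> x \<and> x < b ^ n \<longleftrightarrow> n = dlog b x + 1" for n
      using dlog_eq_iff[OF assms that, of "n - 1"] by (cases n) auto
    then show ?thesis using digit_block_eq[OF assms, of "dlog b x"] by auto
  qed
  show ?thesis
  proof (cases "G \<subseteq> {0<..}")
    case True
    then show ?thesis unfolding dc_semigroup_def using digit_clause by (simp add: subset_iff)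
  qed (simp add: dc_semigroup_def)
qed

lemma dc_semigroup_pos: "dc_semigroup b G \<Longrightarrow> x \<in> G \<Longrightarrow> 0 < x"
  unfolding dc_semigroup_def by auto

lemma dc_semigroup_mult: "dc_semigroup b G \<Longrightarrow> x \<in> G \<Longrightarrow> y \<in> G \<Longrightarrow> x * y \<in> G"
  unfolding dc_semigroup_def by auto

lemma dc_semigroup_dlog_closed:
  "2 \<le> b \<Longrightarrow> dc_semigroup b G \<Longrightarrow> x \<in> G \<Longrightarrow> 0 < y \<Longrightarrow> dlog b y = dlog b x \<Longrightarrow> y \<in> G"
  by (simp add: dc_semigroup_iff)

lemma power_dlog_in_dc_semigroup:
  "2 \<le> b \<Longrightarrow> dc_semigroup b G \<Longrightarrow> x \<in> G \<Longrightarrow> b ^ dlog b x \<in> G"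
  using dc_semigroup_dlog_closed[of b G x "b ^ dlog b x"] by simp

lemma in_dc_semigroup_if_power_in:
  "2 \<le> b \<Longrightarrow> dc_semigroup b G \<Longrightarrow> b ^ m \<in> G \<Longrightarrow> 0 < y \<Longrightarrow> dlog b y = m \<Longrightarrow> y \<in> G"
  using dc_semigroup_dlog_closed[of b G "b ^ m" y] by simp

lemma exists_dlog_mult_carry:
  assumes "2 \<le> b" "3 \<le> b \<or> (1 \<le> i \<and> 1 \<le> j)"
  obtains x y where "0 < x" "0 < y" "dlog b x = i" "dlog b y = j" "dlog b (x * y) = i + j + 1"
proof -
  obtain x y where xy: "0 < x" "0 < y" "dlog b x = i" "dlog b y = j" "b ^ (i + j + 1) \<le> x * y"
  proof (cases "3 \<le> b")
    case True
    have "b \<le> 2 * (b - 1)" using True by simp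
    also have "\<dots> \<le> (b - 1) * (b - 1)" using True by (intro mult_right_mono) auto
    finally have "b ^ (i + j + 1) \<le> ((b - 1) * b ^ i) * ((b - 1) * b ^ j)"
      by (simp add: power_add mult_ac)
    moreover have "dlog b ((b - 1) * b ^ k) = k" for k
      using True by (subst dlog_eq_iff) auto
    ultimately show thesis using that[of "(b - 1) * b ^ i" "(b - 1) * b ^ j"] True by simp
  next
    case False
    then have b: "b = 2" "1 \<le> i" "1 \<le> j" using assms by auto
    have pow: "(2::nat) ^ k = 2 * 2 ^ (k - 1)" if "1 \<le> k" for k
      using that by (metis Suc_diff_le diff_Suc_1 power_Suc)
    have "dlog 2 (3 * 2 ^ (k - 1)) = k" if "1 \<le> k" for k
      using pow[OF that] by (subst dlog_eq_iff) auto
    moreover have "(2::nat) ^ (i + j + 1) \<le> (3 * 2 ^ (i - 1)) * (3 * 2 ^ (j - 1))"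
      using pow[of i] pow[of j] b by (simp add: power_add)
    ultimately show thesis using that[of "3 * 2 ^ (i - 1)" "3 * 2 ^ (j - 1)"] b by simp
  qed
  have "i + j + 1 \<le> dlog b (x * y)" using le_dlog_iff[OF assms(1)] xy by simp
  then have "dlog b (x * y) = i + j + 1" using dlog_mult[OF assms(1) xy(1,2)] xy(3,4) by linarith
  with xy that show thesis by blast
qed

lemma power_add_carry_in_dc_semigroup:
  assumes "2 \<le> b" "dc_semigroup b G" "b ^ i \<in> G" "b ^ j \<in> G" "3 \<le> b \<or> (1 \<le> i \<and> 1 \<le> j)"
  shows "b ^ (i + j + 1) \<in> G"
proof -
  obtain x y where w: "0 < x" "0 < y" "dlog b x = i" "dlog b y = j" "dlog b (x * y) = i + j + 1"
    using exists_dlog_mult_carry[OF assms(1,5)] .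
  have "x * y \<in> G"
    using w in_dc_semigroup_if_power_in[OF assms(1,2)] assms(3,4) by (intro dc_semigroup_mult[OF assms(2)])
  from power_dlog_in_dc_semigroup[OF assms(1,2) this] show ?thesis using w(5) by simp
qed

lemma dc_hull_least: "dc_semigroup b G \<Longrightarrow> X \<subseteq> G \<Longrightarrow> dc_hull b X \<subseteq> G"
  unfolding dc_hull_def by blast

lemma dc_hull_unique:
  assumes "dc_semigroup b H" "X \<subseteq> H" "\<And>G. dc_semigroup b G \<Longrightarrow> X \<subseteq> G \<Longrightarrow> H \<subseteq> G"
  shows "dc_hull b X = H"
  using assms unfolding dc_hull_def by blast

lemma dc_semigroup_positive: "2 \<le> b \<Longrightarrow> dc_semigroup b {0<..}"
  by (simp add: dc_semigroup_iff)

lemma dc_semigroup_Inter: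
  assumes "2 \<le> b" "F \<noteq> {}" "\<And>G. G \<in> F \<Longrightarrow> dc_semigroup b G"
  shows "dc_semigroup b (\<Inter>F)"
  unfolding dc_semigroup_iff[OF assms(1)]
proof (intro conjI ballI allI impI)
  show "\<Inter>F \<subseteq> {0<..}" using assms(2,3) dc_semigroup_pos by fast
  show "x * y \<in> \<Inter>F" if "x \<in> \<Inter>F" "y \<in> \<Inter>F" for x y
    using that assms(3) dc_semigroup_mult by blast
  show "y \<in> \<Inter>F" if "x \<in> \<Inter>F" "0 < y" "dlog b y = dlog b x" for x y
  proof
    fix G assume G: "G \<in> F"
    show "y \<in> G" using dc_semigroup_dlog_closed[OF assms(1) assms(3)[OF G] InterD[OF that(1) G] that(2,3)] .
  qed
qed

lemma dc_semigroup_dc_hull: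
  assumes "2 \<le> b" "0 \<notin> X"
  shows "dc_semigroup b (dc_hull b X)" "X \<subseteq> dc_hull b X"
proof -
  have "{0<..} \<in> {G. dc_semigroup b G \<and> X \<subseteq> G}"
    using assms dc_semigroup_positive[OF assms(1)] by (metis greaterThan_iff mem_Collect_eq neq0_conv subsetI)
  then show "dc_semigroup b (dc_hull b X)"
    unfolding dc_hull_def by (intro dc_semigroup_Inter[OF assms(1)]) auto
  show "X \<subseteq> dc_hull b X" unfolding dc_hull_def by blast
qed

lemma dc_semigroup_insert_one:
  assumes "dc_semigroup 2 H"
  shows "dc_semigroup 2 (insert 1 H)"
proof -
  have "y = 1" if "0 < y" "dlog 2 y = 0" for y :: nat
    using that dlog_eq_zero_iff[of 2 y] by simp
  moreover have "dlog 2 (1::nat) = 0" using dlog_power[of 2 0] by simp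
  ultimately show ?thesis using assms unfolding dc_semigroup_iff[OF order_refl] by auto
qed

lemma dc_hull_insert_one:
  assumes "0 \<notin> X"
  shows "dc_hull 2 (insert 1 X) = insert 1 (dc_hull 2 X)"
proof (rule dc_hull_unique)
  show "dc_semigroup 2 (insert 1 (dc_hull 2 X))"
    by (rule dc_semigroup_insert_one[OF dc_semigroup_dc_hull(1)]) (use assms in auto)
  show "insert 1 X \<subseteq> insert 1 (dc_hull 2 X)"
    using dc_semigroup_dc_hull(2)[of 2 X] assms by auto
next
  fix G assume "dc_semigroup 2 G" "insert 1 X \<subseteq> G"
  then show "insert 1 (dc_hull 2 X) \<subseteq> G" using dc_hull_least[of 2 G X] by blast
qed

lemma dc_hull_empty: "dc_hull b {} = {}"
  by (rule dc_hull_unique) (auto simp: dc_semigroup_def)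

section \<open>Carry sums\<close>

definition digit_class :: "nat \<Rightarrow> nat set \<Rightarrow> nat set" where
  "digit_class b S = {x. 0 < x \<and> dlog b x \<in> S}"

lemma digit_class_Un: "digit_class b (S \<union> T) = digit_class b S \<union> digit_class b T"
  unfolding digit_class_def by auto

lemma digit_class_UN: "digit_class b (\<Union>i\<in>I. S i) = (\<Union>i\<in>I. digit_class b (S i))"
  unfolding digit_class_def by auto

lemma digit_class_UNIV: "digit_class b UNIV = {0<..}"
  unfolding digit_class_def by auto

lemma digit_class_atLeast: "2 \<le> b \<Longrightarrow> digit_class b {i..} = Ib_inf b i"
  unfolding digit_class_def by (auto simp: Ib_inf_iff)

lemma digit_class_atLeastLessThan: "2 \<le> b \<Longrightarrow> digit_class b {i..<i + j} = Ib b i j"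
  unfolding digit_class_def by (auto simp: Ib_iff)

definition carry_sums :: "nat set \<Rightarrow> nat set" where
  "carry_sums J = {m. \<exists>as. as \<noteq> [] \<and> set as \<subseteq> J \<and> sum_list as \<le> m \<and> m < sum_list as + length as}"

lemma dc_semigroup_digit_class:
  assumes "2 \<le> b" "\<And>i j. i \<in> S \<Longrightarrow> j \<in> S \<Longrightarrow> i + j \<in> S \<and> i + j + 1 \<in> S"
  shows "dc_semigroup b (digit_class b S)"
  unfolding dc_semigroup_iff[OF assms(1)] digit_class_def
  using dlog_mult[OF assms(1)] assms(2) by (auto simp: subset_iff) metis+

lemma carry_sums_add:
  assumes "i \<in> carry_sums J" "j \<in> carry_sums J"
  shows "i + j \<in> carry_sums J \<and> i + j + 1 \<in> carry_sums J"
proof -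
  obtain as where as: "as \<noteq> []" "set as \<subseteq> J" "sum_list as \<le> i" "i < sum_list as + length as"
    using assms(1) unfolding carry_sums_def by blast
  obtain bs where bs: "bs \<noteq> []" "set bs \<subseteq> J" "sum_list bs \<le> j" "j < sum_list bs + length bs"
    using assms(2) unfolding carry_sums_def by blast
  have "as @ bs \<noteq> []" "set (as @ bs) \<subseteq> J" using as bs by auto
  moreover have "sum_list (as @ bs) \<le> i + j" "i + j + 1 < sum_list (as @ bs) + length (as @ bs)"
    using as bs by auto
  ultimately show ?thesis unfolding carry_sums_def by (auto intro!: exI[of _ "as @ bs"])
qed

lemma subset_carry_sums: "J \<subseteq> carry_sums J"
  unfolding carry_sums_def by (auto intro!: exI[of _ "[_]"])

lemma power_carry_sum_in_dc_semigroup: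
  assumes "2 \<le> b" "dc_semigroup b G" "\<forall>j\<in>J. b ^ j \<in> G" "3 \<le> b \<or> 0 \<notin> J"
  shows "as \<noteq> [] \<Longrightarrow> set as \<subseteq> J \<Longrightarrow> c < length as \<Longrightarrow> b ^ (sum_list as + c) \<in> G"
proof (induction as arbitrary: c)
  case (Cons a as)
  have a: "b ^ a \<in> G" "a \<in> J" using Cons.prems assms(3) by auto
  show ?case
  proof (cases "as = []")
    case True
    then show ?thesis using Cons.prems(3) a(1) by simp
  next
    case as: False
    show ?thesis
    proof (cases "c < length as")
      case True
      then have "b ^ (sum_list as + c) \<in> G" using Cons as by simp
      then show ?thesis using dc_semigroup_mult[OF assms(2) a(1)] by (simp add: power_add add.assoc)
    next
      case False
      then have c: "c = length as" using Cons.prems(3) by simp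
      have ih: "b ^ (sum_list as + (c - 1)) \<in> G" using Cons as c by simp
      have "3 \<le> b \<or> (1 \<le> a \<and> 1 \<le> sum_list as + (c - 1))"
      proof (cases "3 \<le> b")
        case False
        then have "0 \<notin> set (a # as)" using assms(4) Cons.prems(2) by blast
        moreover have "hd as \<in> set as" "hd as \<le> sum_list as"
          using as by (auto intro: member_le_sum_list)
        ultimately show ?thesis by (metis One_nat_def Suc_leI le_add1 le_trans list.set_intros(1)
            neq0_conv set_subset_Cons subsetD)
      qed simp
      moreover have "a + (sum_list as + (c - 1)) + 1 = sum_list (a # as) + c"
        using c as by (cases as) auto
      ultimately show ?thesis using power_add_carry_in_dc_semigroup[OF assms(1,2) a(1) ih] by metis
    qed
  qed
qed simp

lemma dc_hull_eq_digit_class_carry_sums: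
  assumes "2 \<le> b" "0 \<notin> X" "3 \<le> b \<or> 0 \<notin> dlog b ` X"
  shows "dc_hull b X = digit_class b (carry_sums (dlog b ` X))"
proof (rule dc_hull_unique)
  show "dc_semigroup b (digit_class b (carry_sums (dlog b ` X)))"
    using dc_semigroup_digit_class[OF assms(1) carry_sums_add] .
  show "X \<subseteq> digit_class b (carry_sums (dlog b ` X))"
    using assms(2) subset_carry_sums unfolding digit_class_def by (fastforce intro: gr0I)
next
  fix G assume G: "dc_semigroup b G" "X \<subseteq> G"
  have J: "\<forall>j\<in>dlog b ` X. b ^ j \<in> G" using power_dlog_in_dc_semigroup[OF assms(1) G(1)] G(2) by auto
  show "digit_class b (carry_sums (dlog b ` X)) \<subseteq> G"
  proof
    fix y assume "y \<in> digit_class b (carry_sums (dlog b ` X))"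
    then obtain as where y: "0 < y" "as \<noteq> []" "set as \<subseteq> dlog b ` X"
      "sum_list as \<le> dlog b y" "dlog b y < sum_list as + length as"
      unfolding digit_class_def carry_sums_def by blast
    have "b ^ (sum_list as + (dlog b y - sum_list as)) \<in> G"
      using y by (intro power_carry_sum_in_dc_semigroup[OF assms(1) G(1) J assms(3)]) auto
    then show "y \<in> G" using in_dc_semigroup_if_power_in[OF assms(1) G(1) _ y(1)] y(4) by simp
  qed
qed

lemma carry_sums_eq_UNIV:
  assumes "0 \<in> J"
  shows "carry_sums J = UNIV"
proof -
  have "m \<in> carry_sums J" for m
    unfolding carry_sums_def using assms by (intro CollectI exI[of _ "replicate (Suc m) 0"]) (auto simp: sum_list_replicate)
  then show ?thesis by blast
qed

section \<open>Sums of elements of blocks\<close>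

lemma le_nat_ceiling_divide_mult:
  assumes "0 < l"
  shows "j \<le> nat \<lceil>real j / real l\<rceil> * l"
proof -
  have "real j / real l \<le> real (nat \<lceil>real j / real l\<rceil>)" by linarith
  moreover have "0 < real l" using assms by simp
  ultimately have "real j \<le> real (nat \<lceil>real j / real l\<rceil>) * real l" by (metis pos_divide_le_eq)
  then show ?thesis by (metis of_nat_le_iff of_nat_mult)
qed

lemma length_mult_le_sum_list:
  "\<forall>a\<in>set as. j0 \<le> a \<Longrightarrow> length as * j0 \<le> sum_list (as :: nat list)"
  using sum_list_mono[of as "\<lambda>_. j0" "\<lambda>a. a"] by (simp add: sum_list_triv)

lemma carry_sums_subset_atLeast:
  assumes "\<forall>j\<in>J. j0 \<le> j"
  shows "carry_sums J \<subseteq> {j0..}"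
proof
  fix m assume "m \<in> carry_sums J"
  then obtain as where as: "as \<noteq> []" "set as \<subseteq> J" "sum_list as \<le> m"
    unfolding carry_sums_def by blast
  then have "1 * j0 \<le> length as * j0" by (intro mult_le_mono1) (simp add: Suc_leI)
  also have "\<dots> \<le> sum_list as" using as(2) assms by (intro length_mult_le_sum_list) auto
  finally show "m \<in> {j0..}" using as(3) by simp
qed

lemma ex_sum_list_in_intervals:
  assumes "ps \<noteq> []" "\<forall>pq\<in>set ps. 0 < snd pq"
    "sum_list (map fst ps) \<le> m" "m < sum_list (map fst ps) + sum_list (map snd ps)"
  shows "\<exists>as c. list_all2 (\<lambda>a pq. fst pq \<le> a \<and> a < fst pq + snd pq) as ps \<and> c < length ps \<and>
    sum_list as + c = m"
  using assms
proof (induction ps arbitrary: m rule: list_nonempty_induct)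
  case (single pq)
  then show ?case by (intro exI[of _ "[m]"] exI[of _ 0]) auto
next
  case (cons pq ps)
  define P where "P = sum_list (map fst ps)"
  define Q where "Q = sum_list (map snd ps)"
  have "0 < Q" using cons.hyps cons.prems(1) unfolding Q_def
    by (cases ps) (auto simp: add_pos_nonneg)
  show ?case
  proof (cases "m - fst pq < P + Q")
    case True
    moreover have "P \<le> m - fst pq" using cons.prems(2) unfolding P_def by simp
    ultimately obtain as c where "list_all2 (\<lambda>a pq. fst pq \<le> a \<and> a < fst pq + snd pq) as ps"
      "c < length ps" "sum_list as + c = m - fst pq"
      using cons.IH[of "m - fst pq"] cons.prems(1) unfolding P_def Q_def by auto
    then show ?thesis using cons.prems by (intro exI[of _ "fst pq # as"] exI[of _ c]) auto
  next
    case False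
    \<comment> \<open>fill the tail up to its maximum and put the remainder into the head\<close>
    have "sum_list (map fst ps) \<le> P + Q - 1" "P + Q - 1 < sum_list (map fst ps) + sum_list (map snd ps)"
      using \<open>0 < Q\<close> unfolding P_def Q_def by linarith+
    then have "\<exists>as c. list_all2 (\<lambda>a pq. fst pq \<le> a \<and> a < fst pq + snd pq) as ps \<and>
        c < length ps \<and> sum_list as + c = P + Q - 1"
      using cons.IH[of "P + Q - 1"] cons.prems(1) by simp
    then obtain as c where "list_all2 (\<lambda>a pq. fst pq \<le> a \<and> a < fst pq + snd pq) as ps"
      "c < length ps" "sum_list as + c = P + Q - 1"
      by blast
    then show ?thesis using cons.prems False \<open>0 < Q\<close>
      by (intro exI[of _ "(m - P - Q) # as"] exI[of _ "Suc c"]) (auto simp: P_def Q_def)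
  qed
qed

lemma atLeastLessThan_sum_list_subset_carry_sums:
  assumes "ps \<noteq> []" "\<forall>pq\<in>set ps. 0 < snd pq \<and> {fst pq..<fst pq + snd pq} \<subseteq> J"
  shows "{sum_list (map fst ps)..<sum_list (map fst ps) + sum_list (map snd ps)} \<subseteq> carry_sums J"
proof
  fix m assume "m \<in> {sum_list (map fst ps)..<sum_list (map fst ps) + sum_list (map snd ps)}"
  then obtain as c where as: "list_all2 (\<lambda>a pq. fst pq \<le> a \<and> a < fst pq + snd pq) as ps"
    "c < length ps" "sum_list as + c = m"
    using ex_sum_list_in_intervals[OF assms(1)] assms(2) by fastforce
  have "set as \<subseteq> J"
  proof
    fix a assume "a \<in> set as"
    then obtain i where i: "i < length ps" "a = as ! i"
      using list_all2_lengthD[OF as(1)] by (auto simp: in_set_conv_nth)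
    then have "a \<in> {fst (ps ! i)..<fst (ps ! i) + snd (ps ! i)}"
      using as(1) by (simp add: list_all2_conv_all_nth)
    then show "a \<in> J" using assms(2) nth_mem[OF i(1)] by blast
  qed
  moreover have "length as = length ps" using list_all2_lengthD[OF as(1)] .
  ultimately show "m \<in> carry_sums J"
    unfolding carry_sums_def using assms(1) as(2,3) by (intro CollectI exI[of _ as]) auto
qed

lemma atLeast_subset_carry_sums:
  assumes "0 < j0" "0 < l0" "{j0..<j0 + l0} \<subseteq> J" "j0 \<le> d * l0"
  shows "{d * j0..} \<subseteq> carry_sums J"
proof
  fix m assume "m \<in> {d * j0..}"
  \<comment> \<open>\<open>m\<close> lies in the range of sums of \<open>m div j0\<close> elements of \<open>{j0..<j0 + l0}\<close>\<close>
  define e where "e = m div j0"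
  have "d \<le> e" unfolding e_def using \<open>m \<in> {d * j0..}\<close> assms(1)
    by (metis atLeast_iff div_le_mono nonzero_mult_div_cancel_right not_gr0)
  moreover have "0 < d" using assms(1,4) by (cases d) auto
  ultimately have "0 < e" "j0 \<le> e * l0" using assms(4) by (auto intro: order.trans)
  moreover have "e * j0 \<le> m" "m < e * j0 + j0"
    unfolding e_def using assms(1) div_times_less_eq_dividend[of m j0] mod_less_divisor[of j0 m]
      div_mult_mod_eq[of m j0] by linarith+
  ultimately have "m \<in> {sum_list (map fst (replicate e (j0, l0)))..<
      sum_list (map fst (replicate e (j0, l0))) + sum_list (map snd (replicate e (j0, l0)))}"
    by (simp add: sum_list_replicate)
  then show "m \<in> carry_sums J"
    using atLeastLessThan_sum_list_subset_carry_sums[of "replicate e (j0, l0)" J] assms(2,3) \<open>0 < e\<close>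
    by auto
qed

lemma obtain_sorted_enumeration:
  fixes L :: "'a list" and f :: "'a \<Rightarrow> 'b::linorder"
  obtains ks :: "nat \<Rightarrow> 'a" where "\<forall>i\<in>{1..length L}. ks i \<in> set L"
    "\<forall>i. 1 \<le> i \<and> i < length L \<longrightarrow> f (ks i) \<le> f (ks (Suc i))"
    "\<And>g :: 'a \<Rightarrow> nat. (\<Sum>i=1..length L. g (ks i)) = sum_list (map g L)"
proof
  define S where "S = sort_key f L"
  have S: "length S = length L" "set S = set L" "sorted (map f S)" unfolding S_def by simp_all
  show "\<forall>i\<in>{1..length L}. S ! (i - 1) \<in> set L"
  proof
    fix i assume "i \<in> {1..length L}"
    then have "i - 1 < length S" using S(1) by auto
    then show "S ! (i - 1) \<in> set L" using S(2) nth_mem by blast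
  qed
  show "\<forall>i. 1 \<le> i \<and> i < length L \<longrightarrow> f (S ! (i - 1)) \<le> f (S ! (Suc i - 1))"
    using S(1,3) by (auto simp: sorted_iff_nth_mono)
  fix g :: "'a \<Rightarrow> nat"
  have "(\<Sum>i=1..length L. g (S ! (i - 1))) = (\<Sum>i<length S. g (S ! i))"
    using S(1) sum.atLeast1_atMost_eq[of "\<lambda>i. g (S ! (i - 1))"] by simp
  also have "\<dots> = sum_list (map g S)" by (simp add: sum_list_sum_nth atLeast0LessThan)
  also have "\<dots> = sum_list (map g L)" unfolding S_def by (metis mset_map mset_sort sum_mset_sum_list)
  finally show "(\<Sum>i=1..length L. g (S ! (i - 1))) = sum_list (map g L)" .
qed

lemma blocks_subset_carry_sums:
  fixes e n :: nat and js ls ks :: "nat \<Rightarrow> nat"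
  assumes "\<forall>k\<le>n. 0 < ls k" "(\<Union>k\<le>n. {js k..<js k + ls k}) \<subseteq> J" "1 \<le> e" "\<forall>i\<in>{1..e}. ks i \<le> n"
  shows "{(\<Sum>i=1..e. js (ks i))..<(\<Sum>i=1..e. js (ks i)) + (\<Sum>i=1..e. ls (ks i))} \<subseteq> carry_sums J"
proof -
  define ps where "ps = map (\<lambda>i. (js (ks i), ls (ks i))) [1..<Suc e]"
  have "(\<Sum>i=1..e. g (ks i)) = sum_list (map (g \<circ> ks) [1..<Suc e])" for g :: "nat \<Rightarrow> nat"
    by (simp only: sum_set_upt_conv_sum_list_nat[symmetric] set_upt atLeastLessThanSuc_atLeastAtMost
        comp_def)
  then have "(\<Sum>i=1..e. js (ks i)) = sum_list (map fst ps)" "(\<Sum>i=1..e. ls (ks i)) = sum_list (map snd ps)"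
    unfolding ps_def by (simp_all add: comp_def)
  moreover have "{js k..<js k + ls k} \<subseteq> J" if "k \<le> n" for k
    using assms(2) that by blast
  then have "ps \<noteq> []" "\<forall>pq\<in>set ps. 0 < snd pq \<and> {fst pq..<fst pq + snd pq} \<subseteq> J"
    unfolding ps_def using assms(1,3,4) by auto
  ultimately show ?thesis using atLeastLessThan_sum_list_subset_carry_sums by presburger
qed

lemma carry_sums_below_imp_blocks:
  fixes js ls :: "nat \<Rightarrow> nat"
  assumes "\<forall>j\<in>J. j0 \<le> j" "J \<inter> {0..<d * j0} \<subseteq> (\<Union>k\<le>n. {js k..<js k + ls k})"
    "m \<in> carry_sums J" "m < d * j0"
  shows "\<exists>e\<in>{1..<d}. \<exists>ks. (\<forall>i\<in>{1..e}. ks i \<le> n) \<and> (\<forall>i. 1 \<le> i \<and> i < e \<longrightarrow> js (ks i) \<le> js (ks (Suc i))) \<and>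
    (\<Sum>i=1..e. js (ks i)) \<le> m \<and> m < (\<Sum>i=1..e. js (ks i)) + (\<Sum>i=1..e. ls (ks i))"
proof -
  obtain as where as: "as \<noteq> []" "set as \<subseteq> J" "sum_list as \<le> m" "m < sum_list as + length as"
    using assms(3) unfolding carry_sums_def by blast
  have "\<forall>a\<in>set as. \<exists>k. k \<le> n \<and> js k \<le> a \<and> a < js k + ls k"
  proof
    fix a assume a: "a \<in> set as"
    have "a \<le> sum_list as" using a by (intro member_le_sum_list) auto
    then have "a \<in> J \<inter> {0..<d * j0}" using a as assms(4) by auto
    then have "a \<in> (\<Union>k\<le>n. {js k..<js k + ls k})" using assms(2) by (rule subsetD[rotated])
    then show "\<exists>k. k \<le> n \<and> js k \<le> a \<and> a < js k + ls k" by auto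
  qed
  then obtain blk where blk: "\<forall>a\<in>set as. blk a \<le> n \<and> js (blk a) \<le> a \<and> a < js (blk a) + ls (blk a)"
    by (metis bchoice)
  have "\<forall>a\<in>set as. j0 \<le> a" using as(2) assms(1) by blast
  then have "length as * j0 < d * j0"
    using length_mult_le_sum_list[of as j0] as(3) assms(4) by linarith
  then have e: "length as \<in> {1..<d}" using as(1) by (simp add: Suc_leI)
  obtain ks where ks: "\<forall>i\<in>{1..length (map blk as)}. ks i \<in> set (map blk as)"
    "\<forall>i. 1 \<le> i \<and> i < length (map blk as) \<longrightarrow> js (ks i) \<le> js (ks (Suc i))"
    "\<And>g :: nat \<Rightarrow> nat. (\<Sum>i=1..length (map blk as). g (ks i)) = sum_list (map g (map blk as))"
    using obtain_sorted_enumeration[of "map blk as" js] by blast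
  have "\<forall>i\<in>{1..length as}. ks i \<le> n" using ks(1) blk by auto
  moreover have "(\<Sum>i=1..length as. js (ks i)) \<le> m"
    using ks(3)[of js] blk sum_list_mono[of as "js \<circ> blk" "\<lambda>a. a"] as(3) by (simp add: comp_def)
  moreover have "m < (\<Sum>i=1..length as. js (ks i)) + (\<Sum>i=1..length as. ls (ks i))"
  proof -
    have "sum_list as + length as = sum_list (map (\<lambda>a. a + 1) as)"
      by (induction as) auto
    also have "\<dots> \<le> sum_list (map (\<lambda>a. js (blk a) + ls (blk a)) as)"
      using blk by (intro sum_list_mono) auto
    also have "\<dots> = (\<Sum>i=1..length as. js (ks i)) + (\<Sum>i=1..length as. ls (ks i))"
      using ks(3)[of js] ks(3)[of ls] by (simp add: sum_list_addf comp_def)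
    finally show ?thesis using as(4) by linarith
  qed
  ultimately show ?thesis using e ks(2) by (intro bexI[OF _ e] exI[of _ ks]) simp
qed

lemma carry_sums_eq_atLeast_Un_blocks:
  fixes js ls :: "nat \<Rightarrow> nat"
  assumes "0 < j0" "0 < l0" "{j0..<j0 + l0} \<subseteq> J" "\<forall>j\<in>J. j0 \<le> j" "j0 \<le> d * l0"
    "\<forall>k\<le>n. 0 < ls k" "J \<inter> {0..<d * j0} = (\<Union>k\<le>n. {js k..<js k + ls k})"
  shows "carry_sums J = {d * j0..} \<union>
    (\<Union>e\<in>{1..<d}. \<Union>ks\<in>{ks. (\<forall>i\<in>{1..e}. ks i \<le> n) \<and> (\<forall>i. 1 \<le> i \<and> i < e \<longrightarrow> js (ks i) \<le> js (ks (Suc i)))}.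
      {(\<Sum>i=1..e. js (ks i))..<(\<Sum>i=1..e. js (ks i)) + (\<Sum>i=1..e. ls (ks i))})"
    (is "_ = _ \<union> ?blocks")
proof
  show "carry_sums J \<subseteq> {d * j0..} \<union> ?blocks"
  proof
    fix m assume m: "m \<in> carry_sums J"
    show "m \<in> {d * j0..} \<union> ?blocks"
    proof (cases "d * j0 \<le> m")
      case False
      then show ?thesis using carry_sums_below_imp_blocks[OF assms(4) _ m] assms(7) by auto
    qed simp
  qed
  have "(\<Union>k\<le>n. {js k..<js k + ls k}) \<subseteq> J" using assms(7) by blast
  then have "?blocks \<subseteq> carry_sums J"
    using blocks_subset_carry_sums[OF assms(6)] by (intro UN_least) auto
  then show "{d * j0..} \<union> ?blocks \<subseteq> carry_sums J"
    using atLeast_subset_carry_sums[OF assms(1,2,3,5)] by blast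
qed

lemma dc_hull_eq_Ib_inf:
  assumes "2 \<le> b" "0 \<notin> X" "J = dlog b ` X" "\<forall>j\<in>J. j0 \<le> j" "0 < j0" "{j0..<j0 + l0} \<subseteq> J"
    "nat \<lceil>real j0 / real l0\<rceil> = 1"
  shows "dc_hull b X = Ib_inf b j0"
proof -
  have "0 < l0" using assms(5,7) by (cases l0) auto
  then have "j0 \<le> 1 * l0" using le_nat_ceiling_divide_mult[of l0 j0] assms(7) by simp
  then have "carry_sums J = {j0..}"
    using carry_sums_subset_atLeast[OF assms(4)] atLeast_subset_carry_sums[OF assms(5) \<open>0 < l0\<close> assms(6)]
    by fastforce
  moreover have "0 \<notin> J" using assms(4,5) by auto
  ultimately show ?thesis
    using dc_hull_eq_digit_class_carry_sums[OF assms(1,2)] digit_class_atLeast[OF assms(1)] assms(3) by simp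
qed

lemma dc_hull_eq_Ib_inf_Un_blocks:
  fixes js ls :: "nat \<Rightarrow> nat"
  assumes "2 \<le> b" "0 \<notin> X" "J = dlog b ` X" "\<forall>j\<in>J. j0 \<le> j" "0 < j0" "0 < l0" "{j0..<j0 + l0} \<subseteq> J"
    "d = nat \<lceil>real j0 / real l0\<rceil>"
    "\<forall>k\<le>n. 0 < ls k" "J \<inter> {0..<d * j0} = (\<Union>k\<le>n. {js k..<js k + ls k})"
  shows "dc_hull b X = Ib_inf b (d * j0) \<union>
    (\<Union>e\<in>{1..<d}. \<Union>ks\<in>{ks. (\<forall>i\<in>{1..e}. ks i \<le> n) \<and> (\<forall>i. 1 \<le> i \<and> i < e \<longrightarrow> js (ks i) \<le> js (ks (Suc i)))}.
      Ib b (\<Sum>i=1..e. js (ks i)) (\<Sum>i=1..e. ls (ks i)))"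
proof -
  have "j0 \<le> d * l0" using le_nat_ceiling_divide_mult[OF assms(6)] assms(8) by simp
  note carry_sums_eq_atLeast_Un_blocks[OF assms(5,6,7,4) this assms(9,10)]
  moreover have "0 \<notin> J" using assms(4,5) by auto
  ultimately show ?thesis
    using dc_hull_eq_digit_class_carry_sums[OF assms(1,2)] assms(3)
    by (simp add: digit_class_Un digit_class_UN digit_class_atLeast[OF assms(1)]
        digit_class_atLeastLessThan[OF assms(1)])
qed

lemma dc_hull_binary_eq_insert_one:
  assumes "0 \<notin> X" "0 \<in> dlog 2 ` X"
  shows "dc_hull 2 X = {1} \<union> dc_hull 2 (X - {1})"
proof -
  obtain x where x: "x \<in> X" "dlog 2 x = 0" using assms(2) by force
  then have "0 < x" using assms(1) by (cases x) auto
  then have "x = 1" using x(2) dlog_eq_zero_iff[of 2 x] by simp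
  with x have "1 \<in> X" by simp
  then show ?thesis using dc_hull_insert_one[of "X - {1}"] assms(1) by (simp add: insert_absorb)
qed

lemma dc_hull_eq_positive_nats:
  assumes "3 \<le> b" "0 \<notin> X" "0 \<in> dlog b ` X"
  shows "dc_hull b X = {0<..}"
  using dc_hull_eq_digit_class_carry_sums[of b X] assms carry_sums_eq_UNIV digit_class_UNIV by simp

theorem mainTheorem4:
  fixes b :: nat and X :: "nat set" and J :: "nat set" and j0 :: nat and G :: "nat set"
  assumes hb: "2 \<le> b"
    and hX: "X \<noteq> {}" "0 \<notin> X"
    and hJ: "J = (\<lambda>x. nat \<lfloor>log (real b) (real x)\<rfloor>) ` X"
    and hj0: "j0 = (LEAST j. j \<in> J)"
    and hG: "G = dc_hull b X"
  shows
   "(0 < j0 \<longrightarrow>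
      (\<forall>l0::nat. 0 < l0 \<and> {j0..<j0 + l0} \<subseteq> J \<longrightarrow>
        (let d = nat \<lceil>real j0 / real l0\<rceil>; t = d * j0 in
          (d = 1 \<longrightarrow> G = Ib_inf b j0) \<and>
          (1 < d \<longrightarrow>
            (\<forall>(n::nat) (js::nat \<Rightarrow> nat) (ls::nat \<Rightarrow> nat).
               (\<forall>k\<le>n. 0 < ls k) \<and> (\<forall>k<n. js (Suc k) > js k + ls k) \<and>
               J \<inter> {0..<t} = (\<Union>k\<le>n. {js k..<js k + ls k}) \<longrightarrow>
               G = Ib_inf b t \<union>
                   (\<Union>e\<in>{1..<d}. \<Union>ks\<in>{ks::nat \<Rightarrow> nat.
                        (\<forall>i\<in>{1..e}. ks i \<le> n) \<and>
                        (\<forall>i. 1 \<le> i \<and> i < e \<longrightarrow> js (ks i) \<le> js (ks (Suc i)))}.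
                      Ib b (\<Sum>i=1..e. js (ks i)) (\<Sum>i=1..e. ls (ks i))))))))
    \<and> (j0 = 0 \<and> b = 2 \<longrightarrow>
          (X = {1} \<longrightarrow> G = {1}) \<and>
          (X \<noteq> {1} \<longrightarrow> G = {1} \<union> dc_hull 2 (X - {1})))
    \<and> (j0 = 0 \<and> 2 < b \<longrightarrow> G = {0<..})"
proof -
  have J: "J = dlog b ` X" unfolding hJ dlog_def ..
  have j0: "j0 \<in> J" "\<forall>j\<in>J. j0 \<le> j" using hX(1) unfolding hj0 J by (auto intro: LeastI Least_le)
  show ?thesis
    unfolding Let_def hG
    using dc_hull_eq_Ib_inf[OF hb hX(2) J j0(2)] dc_hull_eq_Ib_inf_Un_blocks[OF hb hX(2) J j0(2)]
      dc_hull_binary_eq_insert_one[OF hX(2)] dc_hull_eq_positive_nats[OF _ hX(2)]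
      dc_hull_empty[of 2] j0(1) J by auto
qed

end
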